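(* For every integer $n>1$, the map $\Phi$ is a bijection between well-labelled Motzkin paths of size $n$ and labelled binary trees with $n$ leaves.
   Context: A well-labelled path of size $n$ is a pair $(\mathbf{p},\sigma)$ with $\mathbf{p}=p_1\ldots p_{n-1}$ a word on $\{-1,0,+1\}$ and $\sigma$ a permutation of $[n]$ such that $p_i=-1\Rightarrow\sigma_i<\sigma_{i+1}$ and $p_i=1\Rightarrow\sigma_i>\sigma_{i+1}$; it is Motzkin if $\sum_{i=1}^jp_i\ge0$ for $j=1,\ldots,n-2$ and $\sum_{i=1}^{n-1}p_i=-1$. A labelled binary tree of size $n$ is a rooted tree with $n$ leaves carrying distinct labels in $[n]$, each unlabelled internal vertex having exactly two unordered children. For a set $I$ of $m$ integers, $\lambda_I$ is the order-preserving bijection $[m]\to I$; for a bijection $\lambda$ and a tree $\tau$, $\lambda(\tau)$ replaces each leaf label $i$ by $\lambda(i)$. The map $\Phi$ is defined recursively on a Motzkin path $(\mathbf{p},\sigma)$ of size $n\ge2$: (i) if $n=2$ (so $\mathbf{p}=(-1)$, $\sigma=12$), $\Phi(\mathbf{p},\sigma)$ is the tree with a root and two leaves labelled $1,2$. (ii) If $n>2$ and $p_1=0$, let $\mathbf{p}'=p_2\ldots p_{n-1}$ and $\sigma'_i=\lambda^{-1}_{[n]\setminus\{\sigma_1\}}(\sigma_{i+1})$ for $i=1,\ldots,n-1$; then $\Phi(\mathbf{p},\sigma)$ is the tree consisting of a root whose two subtrees are a leaf labelled $\sigma_1$ and $\lambda_{[n]\setminus\{\sigma_1\}}(\Phi(\mathbf{p}',\sigma'))$.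 (iii) If $n>2$ and $p_1=1$, let $k$ be the least integer with $\sum_{i=1}^kp_i=0$, let $I'=\{\sigma_1,\ldots,\sigma_k\}$, $I''=\{\sigma_{k+1},\ldots,\sigma_n\}$, $p'_i=-p_{k-i}$ ($1\le i\le k-1$), $p''_i=p_{k+i}$ ($1\le i\le n-k-1$), $\sigma'_i=\lambda^{-1}_{I'}(\sigma_{k+1-i})$ ($1\le i\le k$), $\sigma''_i=\lambda^{-1}_{I''}(\sigma_{k+i})$ ($1\le i\le n-k$); then $\Phi(\mathbf{p},\sigma)$ is the tree consisting of a root whose two subtrees are $\lambda_{I'}(\Phi(\mathbf{p}',\sigma'))$ and $\lambda_{I''}(\Phi(\mathbf{p}'',\sigma''))$. *)

theory Defs
  imports Main
begin

text \<open>Plane binary trees with natural-number leaf labels; unordered trees are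
  obtained by quotienting by the equivalence that allows swapping children.\<close>

datatype ltree = Leaf nat | Node ltree ltree

fun leaves :: "ltree \<Rightarrow> nat list" where
  "leaves (Leaf a) = [a]"
| "leaves (Node l r) = leaves l @ leaves r"

fun relabel :: "(nat \<Rightarrow> nat) \<Rightarrow> ltree \<Rightarrow> ltree" where
  "relabel f (Leaf a) = Leaf (f a)"
| "relabel f (Node l r) = Node (relabel f l) (relabel f r)"

inductive teq :: "ltree \<Rightarrow> ltree \<Rightarrow> bool" where
  teq_leaf: "teq (Leaf a) (Leaf a)"
| teq_same: "teq a c \<Longrightarrow> teq b d \<Longrightarrow> teq (Node a b) (Node c d)"
| teq_swap: "teq a d \<Longrightarrow> teq b c \<Longrightarrow> teq (Node a b) (Node c d)"

definition teq_rel :: "(ltree \<times> ltree) set" where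
  "teq_rel = {(s, t). teq s t}"

definition labelled_trees :: "nat \<Rightarrow> ltree set" where
  "labelled_trees n = {t. distinct (leaves t) \<and> set (leaves t) = {1..n}}"

text \<open>A path p_1..p_{n-1} is an int list (p_i = p ! (i-1)); a permutation
  sigma of [n] is a list sigma_1..sigma_n (sigma_i = sigma ! (i-1)).\<close>
definition well_labelled :: "nat \<Rightarrow> int list \<Rightarrow> nat list \<Rightarrow> bool" where
  "well_labelled n p \<sigma> \<longleftrightarrow>
     length p = n - 1 \<and> set p \<subseteq> {-1, 0, 1} \<and>
     distinct \<sigma> \<and> set \<sigma> = {1..n} \<and>
     (\<forall>i < n - 1. (p ! i = -1 \<longrightarrow> \<sigma> ! i < \<sigma> ! (i+1)) \<and>
                  (p ! i = 1 \<longrightarrow> \<sigma> ! i > \<sigma> ! (i+1)))"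

definition motzkin :: "nat \<Rightarrow> int list \<Rightarrow> nat list \<Rightarrow> bool" where
  "motzkin n p \<sigma> \<longleftrightarrow> well_labelled n p \<sigma> \<and>
     (\<forall>j \<in> {1..n-2}. sum_list (take j p) \<ge> 0) \<and> sum_list p = -1"

definition motzkin_paths :: "nat \<Rightarrow> (int list \<times> nat list) set" where
  "motzkin_paths n = {(p, \<sigma>). motzkin n p \<sigma>}"

text \<open>lambda_I: the order-preserving bijection [m] -> I, and its inverse.\<close>
definition lam :: "nat set \<Rightarrow> nat \<Rightarrow> nat" where
  "lam I i = sorted_list_of_set I ! (i - 1)"

definition lam_inv :: "nat set \<Rightarrow> nat \<Rightarrow> nat" where
  "lam_inv I x = card {y \<in> I. y \<le> x}"

text \<open>Recursive definition with a fuel argument (the first argument); Phi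
  applies it with fuel = size, which always suffices since subcalls are on
  strictly smaller sizes.\<close>
fun phi :: "nat \<Rightarrow> int list \<Rightarrow> nat list \<Rightarrow> ltree" where
  "phi 0 p \<sigma> = Leaf 0"
| "phi (Suc f) p \<sigma> =
    (let n = length \<sigma> in
     if n \<le> 2 then Node (Leaf (\<sigma> ! 0)) (Leaf (\<sigma> ! 1))
     else if p ! 0 = 0 then
       (let J = {1..n} - {\<sigma> ! 0};
            p' = tl p;
            \<sigma>' = map (lam_inv J) (tl \<sigma>)
        in Node (Leaf (\<sigma> ! 0)) (relabel (lam J) (phi f p' \<sigma>')))
     else
       (let k = (LEAST k. k \<ge> 1 \<and> sum_list (take k p) = 0);
            I1 = set (take k \<sigma>);
            I2 = set (drop k \<sigma>);
            p1 = map uminus (rev (take (k - 1) p));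
            p2 = drop k p;
            \<sigma>1 = map (lam_inv I1) (rev (take k \<sigma>));
            \<sigma>2 = map (lam_inv I2) (drop k \<sigma>)
        in Node (relabel (lam I1) (phi f p1 \<sigma>1)) (relabel (lam I2) (phi f p2 \<sigma>2))))"

definition Phi :: "int list \<times> nat list \<Rightarrow> ltree" where
  "Phi w = phi (length (snd w)) (fst w) (snd w)"

end

theory Submission
  imports Defs "HOL-Library.Multiset"
begin

text \<open>A well-labelled Motzkin path is either a single down step, a flat step followed by a
  shorter path, or, cutting at the first return of the height to zero, the reversed and negated
  image of a path, a down step, and a second path: p = mirror q1 @ -1 # q2 with labels
  rev \<tau>1 @ \<tau>2, where the down step forces hd \<tau>1 < hd \<tau>2.
  \<Phi> follows exactly this decomposition, so on arbitrary distinct labels (the map psi,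
  which never standardizes) it produces a cherry, a leaf beside a tree, or two trees.
  Injectivity up to swapping children holds because a crosswise match of the two subtrees would
  contradict hd \<tau>1 < hd \<tau>2; surjectivity follows by ordering the two subtrees by
  the first labels of paths realising them. Standardizing labels commutes with psi, so
  \<Phi> agrees with psi on paths labelled by [n].\<close>

lemma lam_inv_strict_mono:
  assumes "finite A" "x \<in> A" "y \<in> A" "x < y"
  shows "lam_inv A x < lam_inv A y"
  unfolding lam_inv_def
proof (rule psubset_card_mono)
  have "{z \<in> A. z \<le> x} \<subseteq> {z \<in> A. z \<le> y}" "y \<in> {z \<in> A. z \<le> y} - {z \<in> A. z \<le> x}"
    using assms by auto
  then show "{z \<in> A. z \<le> x} \<subset> {z \<in> A. z \<le> y}" by blast
qed (use assms in auto)

lemma lam_inv_image: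
  assumes "finite A"
  shows "lam_inv A ` A = {1..card A}"
proof (rule card_subset_eq)
  have "inj_on (lam_inv A) A"
  proof (rule inj_onI)
    fix x y assume "x \<in> A" "y \<in> A" "lam_inv A x = lam_inv A y"
    then show "x = y"
      using lam_inv_strict_mono[OF assms, of x y] lam_inv_strict_mono[OF assms, of y x]
      by (cases x y rule: linorder_cases) auto
  qed
  then show "card (lam_inv A ` A) = card {1..card A}" by (simp add: card_image)
  have "1 \<le> lam_inv A x \<and> lam_inv A x \<le> card A" if "x \<in> A" for x
  proof -
    have "x \<in> {z \<in> A. z \<le> x}" using that by simp
    then have "{z \<in> A. z \<le> x} \<noteq> {}" by blast
    then show ?thesis unfolding lam_inv_def using assms
      by (simp add: Suc_le_eq card_gt_0_iff card_mono)
  qed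
  then show "lam_inv A ` A \<subseteq> {1..card A}" by auto
qed simp

lemma lam_lam_inv:
  assumes "finite A" "x \<in> A"
  shows "lam A (lam_inv A x) = x"
proof -
  define L where "L = sorted_list_of_set A"
  have L: "sorted_wrt (<) L" "set L = A" "distinct L" using assms(1) by (auto simp: L_def)
  obtain i where i: "i < length L" "x = L ! i" using assms L(2) by (metis in_set_conv_nth)
  have "{z \<in> A. z \<le> x} = set (take (Suc i) L)"
  proof (intro set_eqI iffI)
    fix z assume "z \<in> {z \<in> A. z \<le> x}"
    then obtain j where "j < length L" "z = L ! j" "L ! j \<le> L ! i"
      using L(2) i by (auto simp: in_set_conv_nth)
    then have "j \<le> i" using L(1) i by (meson leD linorder_le_less_linear sorted_wrt_iff_nth_less)
    then show "z \<in> set (take (Suc i) L)"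
      using \<open>z = L ! j\<close> i by (auto simp: in_set_conv_nth intro!: exI[of _ j])
  next
    fix z assume "z \<in> set (take (Suc i) L)"
    then obtain j where "j \<le> i" "z = L ! j" using i by (auto simp: in_set_conv_nth less_Suc_eq_le)
    moreover have "L ! j \<le> L ! i"
      using \<open>j \<le> i\<close> i L(1) by (metis le_eq_less_or_eq sorted_wrt_iff_nth_less)
    ultimately show "z \<in> {z \<in> A. z \<le> x}" using i L(2) by auto
  qed
  then have "lam_inv A x = Suc i" unfolding lam_inv_def using i L(3) by (simp add: distinct_card)
  then show ?thesis unfolding lam_def L_def[symmetric] using i by simp
qed

lemma teq_refl: "teq t t"
  by (induction t) (auto intro: teq.intros)

lemma teq_sym: "teq s t \<Longrightarrow> teq t s"
  by (induction rule: teq.induct) (auto intro: teq.intros)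

lemma teq_Leaf_iff: "teq (Leaf a) t \<longleftrightarrow> t = Leaf a"
  by (auto elim: teq.cases intro: teq.intros)

lemma teq_Node_iff: "teq (Node a b) t \<longleftrightarrow>
   (\<exists>c d. t = Node c d \<and> (teq a c \<and> teq b d \<or> teq a d \<and> teq b c))"
  by (auto elim: teq.cases intro: teq.intros)

lemma teq_trans: "teq s t \<Longrightarrow> teq t u \<Longrightarrow> teq s u"
  by (induction arbitrary: u rule: teq.induct) (auto simp: teq_Node_iff)

lemma equiv_teq_rel: "equiv UNIV teq_rel"
  unfolding equiv_def refl_on_def sym_def trans_def teq_rel_def
  using teq_refl teq_sym teq_trans by blast

lemma leaves_ne_Nil: "leaves t \<noteq> []"
  by (induction t) auto

section \<open>Motzkin words and their first-return decomposition\<close>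

definition mirror :: "int list \<Rightarrow> int list" where
  "mirror p = map uminus (rev p)"

lemma mirror_mirror [simp]: "mirror (mirror p) = p"
  by (simp add: mirror_def rev_map)

lemma length_mirror [simp]: "length (mirror p) = length p"
  by (simp add: mirror_def)

lemma sum_list_mirror [simp]: "sum_list (mirror p) = - sum_list p"
  by (induction p) (auto simp: mirror_def)

lemma prefix_sum_mirror:
  assumes "j \<le> length p"
  shows "sum_list (take j (mirror p)) = sum_list (take (length p - j) p) - sum_list p"
proof -
  have "sum_list p = sum_list (take (length p - j) p) + sum_list (drop (length p - j) p)"
    by (metis append_take_drop_id sum_list_append)
  moreover have "take j (mirror p) = mirror (drop (length p - j) p)"
    using assms by (simp add: mirror_def take_map take_rev)
  ultimately show ?thesis by simp
qed

definition motzkin_word :: "int list \<Rightarrow> bool" where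
  "motzkin_word p \<longleftrightarrow> set p \<subseteq> {-1, 0, 1} \<and>
     (\<forall>j \<in> {1..<length p}. 0 \<le> sum_list (take j p)) \<and> sum_list p = -1"

lemma motzkin_word_ne_Nil: "motzkin_word p \<Longrightarrow> p \<noteq> []"
  by (auto simp: motzkin_word_def)

lemma motzkin_word_single: "motzkin_word [-1]"
  by (simp add: motzkin_word_def)

lemma motzkin_word_Cons_0: "motzkin_word (0 # q) \<longleftrightarrow> motzkin_word q"
proof -
  have "(\<forall>j \<in> {1..<length (0 # q)}. 0 \<le> sum_list (take j (0 # q))) \<longleftrightarrow>
        (\<forall>j \<in> {1..<length q}. 0 \<le> sum_list (take j q))"
  proof
    assume H: "\<forall>j \<in> {1..<length (0 # q)}. 0 \<le> sum_list (take j (0 # q))"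
    show "\<forall>j \<in> {1..<length q}. 0 \<le> sum_list (take j q)"
      using H[rule_format, of "Suc _"] by simp
  next
    assume H: "\<forall>j \<in> {1..<length q}. 0 \<le> sum_list (take j q)"
    show "\<forall>j \<in> {1..<length (0 # q)}. 0 \<le> sum_list (take j (0 # q))"
    proof
      fix j assume "j \<in> {1..<length (0 # q)}"
      then obtain j' where "j = Suc j'" "j' < length q" by (cases j) auto
      then show "0 \<le> sum_list (take j (0 # q))" using H[rule_format, of j'] by (cases j') auto
    qed
  qed
  then show ?thesis by (simp add: motzkin_word_def)
qed

lemma prefix_sum_join_head:
  assumes "motzkin_word q1" "1 \<le> j" "j \<le> length q1"
  shows "1 \<le> sum_list (take j (mirror q1 @ -1 # q2))"
proof -
  have "length q1 - j = 0 \<or> length q1 - j \<in> {1..<length q1}" using assms by auto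
  then have "0 \<le> sum_list (take (length q1 - j) q1)"
    using assms(1) unfolding motzkin_word_def by auto
  then show ?thesis using assms prefix_sum_mirror[of j q1] by (simp add: motzkin_word_def)
qed

lemma prefix_sum_join_tail:
  assumes "motzkin_word q1" "length q1 < j"
  shows "sum_list (take j (mirror q1 @ -1 # q2)) = sum_list (take (j - Suc (length q1)) q2)"
proof -
  have "j - length q1 = Suc (j - Suc (length q1))" using assms(2) by simp
  then have "take j (mirror q1 @ -1 # q2) = mirror q1 @ -1 # take (j - Suc (length q1)) q2"
    using assms(2) by simp
  then show ?thesis using assms(1) by (simp add: motzkin_word_def)
qed

lemma motzkin_word_join:
  assumes "motzkin_word q1" "motzkin_word q2"
  shows "motzkin_word (mirror q1 @ -1 # q2)"
  unfolding motzkin_word_def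
proof (intro conjI ballI)
  show "set (mirror q1 @ -1 # q2) \<subseteq> {-1, 0, 1}"
    using assms by (auto simp: motzkin_word_def mirror_def)
  show "sum_list (mirror q1 @ -1 # q2) = -1" using assms by (simp add: motzkin_word_def)
  fix j assume j: "j \<in> {1..<length (mirror q1 @ -1 # q2)}"
  show "0 \<le> sum_list (take j (mirror q1 @ -1 # q2))"
  proof (cases "j \<le> length q1")
    case True
    moreover have "1 \<le> j" using j by simp
    ultimately show ?thesis
      using prefix_sum_join_head[of q1 j q2] assms(1) by simp
  next
    case False
    then have "sum_list (take j (mirror q1 @ -1 # q2)) = sum_list (take (j - Suc (length q1)) q2)"
      by (intro prefix_sum_join_tail assms(1)) simp
    moreover have "0 \<le> sum_list (take (j - Suc (length q1)) q2)"
    proof (cases "j = Suc (length q1)")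
      case False
      then have "j - Suc (length q1) \<in> {1..<length q2}" using j \<open>\<not> j \<le> length q1\<close> by auto
      then show ?thesis using assms(2) by (simp add: motzkin_word_def)
    qed simp
    ultimately show ?thesis by simp
  qed
qed

lemma first_return_join:
  assumes "motzkin_word q1"
  shows "(LEAST k. 1 \<le> k \<and> sum_list (take k (mirror q1 @ -1 # q2)) = 0) = Suc (length q1)"
proof (rule Least_equality)
  show "1 \<le> Suc (length q1) \<and> sum_list (take (Suc (length q1)) (mirror q1 @ -1 # q2)) = 0"
    using prefix_sum_join_tail[OF assms, of "Suc (length q1)"] by simp
  fix k assume "1 \<le> k \<and> sum_list (take k (mirror q1 @ -1 # q2)) = 0"
  then show "Suc (length q1) \<le> k"
    using prefix_sum_join_head[OF assms, of k q2] by (cases "k \<le> length q1") auto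
qed

lemma motzkin_word_first_return:
  assumes p: "motzkin_word p" and "p ! 0 \<noteq> 0" and "2 \<le> length p"
  obtains k where "2 \<le> k" "k < length p" "p ! (k - 1) = -1" "sum_list (take (k - 1) p) = 1"
    "\<And>j. 1 \<le> j \<Longrightarrow> j < k \<Longrightarrow> 1 \<le> sum_list (take j p)"
proof -
  define s where "s j = sum_list (take j p)" for j
  have step: "s (Suc j) = s j + p ! j" "p ! j \<in> {-1, 0, 1}" if "j < length p" for j
    using that p nth_mem by (auto simp: s_def take_Suc_conv_app_nth motzkin_word_def)
  have nonneg: "0 \<le> s j" if "1 \<le> j" "j < length p" for j
    using that p by (simp add: s_def motzkin_word_def)
  have "s 1 = p ! 0" using assms(3) by (cases p) (auto simp: s_def)
  moreover have "0 \<le> s 1" using nonneg[of 1] assms(3) by simp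
  ultimately have s1: "s 1 = 1" using step(2)[of 0] assms(2,3) by (cases p) auto
  have total: "s (length p) = -1" using p by (simp add: s_def motzkin_word_def)
  \<comment> \<open>the first time the height drops to at most 0; steps of size 1 force it to be exactly 0\<close>
  define k where "k = (LEAST j. 1 \<le> j \<and> s j \<le> 0)"
  have k: "1 \<le> k" "s k \<le> 0" "k \<le> length p"
    using LeastI[of "\<lambda>j. 1 \<le> j \<and> s j \<le> 0" "length p"] Least_le[of _ "length p"] total assms(3)
    unfolding k_def by auto
  have above: "1 \<le> s j" if "1 \<le> j" "j < k" for j
    using not_less_Least[of j "\<lambda>j. 1 \<le> j \<and> s j \<le> 0"] that unfolding k_def by auto
  have "k \<noteq> 1" using k s1 by auto
  then have k2: "2 \<le> k" using k by simp
  then have "1 \<le> s (k - 1)" "s k = s (k - 1) + p ! (k - 1)" "p ! (k - 1) \<in> {-1, 0, 1}"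
    using above[of "k - 1"] step[of "k - 1"] k by auto
  then have "p ! (k - 1) = -1" "s (k - 1) = 1" "s k = 0" using k by auto
  moreover have "k < length p" using k total \<open>s k = 0\<close> by (cases "k = length p") auto
  ultimately show thesis using that k2 above unfolding s_def by blast
qed

lemma motzkin_word_decompose:
  assumes p: "motzkin_word p" and "p ! 0 \<noteq> 0" and "2 \<le> length p"
  obtains q1 q2 where "p = mirror q1 @ -1 # q2" "motzkin_word q1" "motzkin_word q2"
proof -
  obtain k where k: "2 \<le> k" "k < length p" "p ! (k - 1) = -1" "sum_list (take (k - 1) p) = 1"
    and above: "\<And>j. 1 \<le> j \<Longrightarrow> j < k \<Longrightarrow> 1 \<le> sum_list (take j p)"
    using motzkin_word_first_return[OF assms] by blast
  define q1 where "q1 = mirror (take (k - 1) p)"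
  define q2 where "q2 = drop k p"
  have set_p: "set p \<subseteq> {-1, 0, 1}" using p by (simp add: motzkin_word_def)
  have "p = take (k - 1) p @ p ! (k - 1) # drop (Suc (k - 1)) p"
    using k(2) by (simp add: id_take_nth_drop)
  then have split: "p = mirror q1 @ -1 # q2" using k(1,3) by (simp add: q1_def q2_def)
  have "sum_list p = sum_list (take (k - 1) p) - 1 + sum_list q2"
    using arg_cong[OF split, of sum_list] by (simp add: q1_def)
  then have sum_q2: "sum_list q2 = -1" using p k by (simp add: motzkin_word_def)
  have "motzkin_word q1"
    unfolding motzkin_word_def
  proof (intro conjI ballI)
    show "set q1 \<subseteq> {-1, 0, 1}" using set_p set_take_subset[of "k - 1" p]
      by (auto simp: q1_def mirror_def)
    show "sum_list q1 = -1" using k(4) by (simp add: q1_def)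
    fix j assume j: "j \<in> {1..<length q1}"
    then have "length q1 = k - 1" using k(2) by (simp add: q1_def)
    moreover have "take (k - 1 - j) (take (k - 1) p) = take (k - 1 - j) p" by simp
    ultimately have "sum_list (take j q1) = sum_list (take (k - 1 - j) p) - 1"
      using prefix_sum_mirror[of j "take (k - 1) p"] j k(4) by (simp add: q1_def)
    moreover have "1 \<le> k - 1 - j" "k - 1 - j < k" using j \<open>length q1 = k - 1\<close> by auto
    ultimately show "0 \<le> sum_list (take j q1)" using above by fastforce
  qed
  moreover have "motzkin_word q2"
    unfolding motzkin_word_def
  proof (intro conjI ballI)
    show "set q2 \<subseteq> {-1, 0, 1}" using set_p set_drop_subset[of k p] by (auto simp: q2_def)
    show "sum_list q2 = -1" by (rule sum_q2)
    fix j assume "j \<in> {1..<length q2}"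
    then have "k + j \<in> {1..<length p}" by (auto simp: q2_def)
    then have "0 \<le> sum_list (take (k + j) p)" using p by (simp add: motzkin_word_def)
    moreover have "length q1 = k - 1" using k(2) by (simp add: q1_def)
    then have "sum_list (take (k + j) p) = sum_list (take j q2)"
      using prefix_sum_join_tail[OF \<open>motzkin_word q1\<close>, of "k + j" q2] k(1)
      by (simp add: split[symmetric])
    ultimately show "0 \<le> sum_list (take j q2)" by simp
  qed
  ultimately show thesis using that split by blast
qed

section \<open>Well-labelled Motzkin paths on arbitrary labels\<close>

definition step_fits :: "int \<Rightarrow> nat \<Rightarrow> nat \<Rightarrow> bool" where
  "step_fits d a b \<longleftrightarrow> (d = -1 \<longrightarrow> a < b) \<and> (d = 1 \<longrightarrow> b < a)"

fun labels_fit :: "int list \<Rightarrow> nat list \<Rightarrow> bool" where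
  "labels_fit (d # p) (a # b # \<sigma>) \<longleftrightarrow> step_fits d a b \<and> labels_fit p (b # \<sigma>)"
| "labels_fit _ _ \<longleftrightarrow> True"

lemma labels_fit_iff_nth:
  "length \<sigma> = Suc (length p) \<Longrightarrow>
   labels_fit p \<sigma> \<longleftrightarrow> (\<forall>i < length p. step_fits (p ! i) (\<sigma> ! i) (\<sigma> ! Suc i))"
proof (induction p arbitrary: \<sigma>)
  case (Cons d p)
  then obtain a b \<tau> where "\<sigma> = a # b # \<tau>" by (metis length_Suc_conv)
  then show ?case using Cons by (simp add: All_less_Suc2)
qed simp

lemma labels_fit_append:
  assumes "length \<sigma>1 = Suc (length p1)" "\<sigma>2 \<noteq> []"
  shows "labels_fit (p1 @ d # p2) (\<sigma>1 @ \<sigma>2) \<longleftrightarrow>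
    labels_fit p1 \<sigma>1 \<and> step_fits d (last \<sigma>1) (hd \<sigma>2) \<and> labels_fit p2 \<sigma>2"
  using assms
proof (induction p1 arbitrary: \<sigma>1)
  case Nil
  then obtain a where "\<sigma>1 = [a]" by (metis length_0_conv length_Suc_conv)
  then show ?case using Nil by (cases \<sigma>2) auto
next
  case (Cons e p1)
  then obtain a b \<tau> where "\<sigma>1 = a # b # \<tau>" by (metis length_Suc_conv)
  then show ?case using Cons.IH[of "b # \<tau>"] Cons.prems by auto
qed

lemma step_fits_uminus: "step_fits (- d) b a \<longleftrightarrow> step_fits d a b"
  by (auto simp: step_fits_def)

lemma labels_fit_mirror:
  "length \<sigma> = Suc (length p) \<Longrightarrow> labels_fit (mirror p) (rev \<sigma>) \<longleftrightarrow> labels_fit p \<sigma>"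
proof (induction p arbitrary: \<sigma>)
  case (Cons d p)
  then obtain a \<tau> where \<sigma>: "\<sigma> = a # \<tau>" "length \<tau> = Suc (length p)" by (metis length_Suc_conv)
  then obtain b \<tau>' where \<tau>: "\<tau> = b # \<tau>'" by (metis length_Suc_conv)
  have "labels_fit (mirror (d # p)) (rev \<sigma>) = labels_fit (mirror p @ [- d]) (rev \<tau> @ [a])"
    by (simp add: \<sigma> mirror_def)
  also have "\<dots> \<longleftrightarrow> labels_fit (mirror p) (rev \<tau>) \<and> step_fits (- d) (last (rev \<tau>)) a"
    using labels_fit_append[of "rev \<tau>" "mirror p" "[a]" "- d" "[]"] \<sigma>(2) by simp
  also have "\<dots> \<longleftrightarrow> labels_fit (d # p) \<sigma>"
    using Cons.IH[OF \<sigma>(2)] by (auto simp: \<sigma> \<tau> step_fits_uminus)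
  finally show ?case .
qed (simp add: mirror_def)

lemma labels_fit_join:
  assumes "length \<tau>1 = Suc (length q1)" "\<tau>2 \<noteq> []"
  shows "labels_fit (mirror q1 @ -1 # q2) (rev \<tau>1 @ \<tau>2) \<longleftrightarrow>
    labels_fit q1 \<tau>1 \<and> hd \<tau>1 < hd \<tau>2 \<and> labels_fit q2 \<tau>2"
proof -
  have "\<tau>1 \<noteq> []" using assms(1) by auto
  then show ?thesis
    using labels_fit_append[of "rev \<tau>1" "mirror q1" \<tau>2 "-1" q2] labels_fit_mirror[of \<tau>1 q1] assms
    by (simp add: step_fits_def last_rev)
qed

lemma labels_fit_map_mono:
  "labels_fit p \<sigma> \<Longrightarrow> strict_mono_on (set \<sigma>) g \<Longrightarrow> labels_fit p (map g \<sigma>)"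
  by (induction p \<sigma> rule: labels_fit.induct) (auto simp: step_fits_def strict_mono_on_def)

definition motzkin_path :: "int list \<Rightarrow> nat list \<Rightarrow> bool" where
  "motzkin_path p \<sigma> \<longleftrightarrow>
     length \<sigma> = Suc (length p) \<and> distinct \<sigma> \<and> motzkin_word p \<and> labels_fit p \<sigma>"

lemma motzkin_path_length: "motzkin_path p \<sigma> \<Longrightarrow> 2 \<le> length \<sigma>"
  using motzkin_word_ne_Nil[of p] by (cases p) (auto simp: motzkin_path_def)

lemma motzkin_path_base: "motzkin_path [-1] [a, b] \<longleftrightarrow> a < b"
  by (auto simp: motzkin_path_def motzkin_word_single step_fits_def)

lemma motzkin_path_Cons_0:
  "motzkin_path (0 # q) (a # \<tau>) \<longleftrightarrow> motzkin_path q \<tau> \<and> a \<notin> set \<tau>"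
  by (cases \<tau>) (auto simp: motzkin_path_def motzkin_word_Cons_0 step_fits_def)

lemma motzkin_path_join:
  assumes "length \<tau>1 = Suc (length q1)" "length \<tau>2 = Suc (length q2)"
    and "motzkin_word q1" "motzkin_word q2"
  shows "motzkin_path (mirror q1 @ -1 # q2) (rev \<tau>1 @ \<tau>2) \<longleftrightarrow>
    motzkin_path q1 \<tau>1 \<and> motzkin_path q2 \<tau>2 \<and> set \<tau>1 \<inter> set \<tau>2 = {} \<and> hd \<tau>1 < hd \<tau>2"
proof -
  have "\<tau>2 \<noteq> []" using assms(2) by auto
  then show ?thesis
    using assms labels_fit_join[of \<tau>1 q1 \<tau>2 q2] motzkin_word_join[OF assms(3,4)]
    by (auto simp: motzkin_path_def)
qed

lemma motzkin_path_cases [consumes 1, case_names base Cons_0 join]: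
  assumes "motzkin_path p \<sigma>"
  obtains (base) a b where "p = [-1]" "\<sigma> = [a, b]" "a < b"
  | (Cons_0) a q \<tau> where "p = 0 # q" "\<sigma> = a # \<tau>" "motzkin_path q \<tau>" "a \<notin> set \<tau>"
  | (join) q1 \<tau>1 q2 \<tau>2 where "p = mirror q1 @ -1 # q2" "\<sigma> = rev \<tau>1 @ \<tau>2"
      "motzkin_path q1 \<tau>1" "motzkin_path q2 \<tau>2" "set \<tau>1 \<inter> set \<tau>2 = {}" "hd \<tau>1 < hd \<tau>2"
proof -
  have len: "length \<sigma> = Suc (length p)" and word: "motzkin_word p"
    using assms by (auto simp: motzkin_path_def)
  have "length p \<noteq> 0" using motzkin_word_ne_Nil[OF word] by simp
  then consider "length p = 1" | "2 \<le> length p" "p ! 0 = 0" | "2 \<le> length p" "p ! 0 \<noteq> 0"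
    by (cases "length p = 1"; cases "p ! 0 = 0") auto
  then show thesis
  proof cases
    case 1
    then obtain d a b where "p = [d]" "\<sigma> = [a, b]" using len
      by (auto simp: length_Suc_conv numeral_2_eq_2)
    moreover have "d = -1" using word \<open>p = [d]\<close> by (simp add: motzkin_word_def)
    ultimately show thesis using base assms motzkin_path_base by blast
  next
    case 2
    then obtain q a \<tau> where "p = 0 # q" "\<sigma> = a # \<tau>" using len
      by (cases p; cases \<sigma>) auto
    then show thesis using Cons_0 assms motzkin_path_Cons_0 by blast
  next
    case 3
    obtain q1 q2 where p: "p = mirror q1 @ -1 # q2" "motzkin_word q1" "motzkin_word q2"
      using motzkin_word_decompose[OF word 3(2,1)] by blast
    define \<tau>1 where "\<tau>1 = rev (take (Suc (length q1)) \<sigma>)"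
    define \<tau>2 where "\<tau>2 = drop (Suc (length q1)) \<sigma>"
    have "\<sigma> = rev \<tau>1 @ \<tau>2" "length \<tau>1 = Suc (length q1)" "length \<tau>2 = Suc (length q2)"
      using len p(1) by (simp_all add: \<tau>1_def \<tau>2_def)
    then show thesis using join assms p motzkin_path_join by metis
  qed
qed

lemma motzkin_path_induct [consumes 1, case_names base Cons_0 join]:
  assumes "motzkin_path p \<sigma>"
    and base: "\<And>a b. a < b \<Longrightarrow> P [-1] [a, b]"
    and Cons_0: "\<And>a q \<tau>. motzkin_path q \<tau> \<Longrightarrow> a \<notin> set \<tau> \<Longrightarrow> P q \<tau> \<Longrightarrow> P (0 # q) (a # \<tau>)"
    and join: "\<And>q1 \<tau>1 q2 \<tau>2. motzkin_path q1 \<tau>1 \<Longrightarrow> motzkin_path q2 \<tau>2 \<Longrightarrow>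
      set \<tau>1 \<inter> set \<tau>2 = {} \<Longrightarrow> hd \<tau>1 < hd \<tau>2 \<Longrightarrow> P q1 \<tau>1 \<Longrightarrow> P q2 \<tau>2 \<Longrightarrow>
      P (mirror q1 @ -1 # q2) (rev \<tau>1 @ \<tau>2)"
  shows "P p \<sigma>"
  using assms(1)
proof (induction "length \<sigma>" arbitrary: p \<sigma> rule: less_induct)
  case less
  from less.prems show ?case
  proof (cases rule: motzkin_path_cases)
    case (Cons_0 a q \<tau>)
    then show ?thesis using assms(3) less.hyps by simp
  next
    case (join q1 \<tau>1 q2 \<tau>2)
    moreover have "length \<tau>1 < length \<sigma>" "length \<tau>2 < length \<sigma>"
      using join motzkin_path_length[of q1 \<tau>1] motzkin_path_length[of q2 \<tau>2] by auto
    ultimately show ?thesis using assms(4) less.hyps by simp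
  qed (simp add: base)
qed

section \<open>\<Phi> without standardization\<close>

text \<open>The guard on k only serves termination: it always holds on Motzkin paths.\<close>
function psi :: "int list \<Rightarrow> nat list \<Rightarrow> ltree" where
  "psi p \<sigma> =
    (if length \<sigma> \<le> 2 then Node (Leaf (\<sigma> ! 0)) (Leaf (\<sigma> ! 1))
     else if p ! 0 = 0 then Node (Leaf (\<sigma> ! 0)) (psi (tl p) (tl \<sigma>))
     else let k = (LEAST k. 1 \<le> k \<and> sum_list (take k p) = 0) in
       if 0 < k \<and> k < length \<sigma>
       then Node (psi (mirror (take (k - 1) p)) (rev (take k \<sigma>))) (psi (drop k p) (drop k \<sigma>))
       else Leaf 0)"
  by pat_completeness auto
termination by (relation "measure (\<lambda>(p, \<sigma>). length \<sigma>)") auto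

declare psi.simps [simp del]

lemma first_step_join_nonzero:
  assumes "motzkin_word q1"
  shows "(mirror q1 @ -1 # q2) ! 0 \<noteq> 0"
proof -
  have "1 \<le> length q1" using motzkin_word_ne_Nil[OF assms] by (cases q1) auto
  then have "1 \<le> sum_list (take 1 (mirror q1 @ -1 # q2))" using prefix_sum_join_head[OF assms] by simp
  then show ?thesis by (cases "mirror q1") auto
qed

lemma psi_base: "psi [-1] [a, b] = Node (Leaf a) (Leaf b)"
  by (simp add: psi.simps)

lemma psi_Cons_0: "2 \<le> length \<tau> \<Longrightarrow> psi (0 # q) (a # \<tau>) = Node (Leaf a) (psi q \<tau>)"
  by (subst psi.simps) simp

lemma psi_join:
  assumes "motzkin_word q1" "length \<tau>1 = Suc (length q1)" "length \<tau>2 = Suc (length q2)"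
  shows "psi (mirror q1 @ -1 # q2) (rev \<tau>1 @ \<tau>2) = Node (psi q1 \<tau>1) (psi q2 \<tau>2)"
proof -
  have "q1 \<noteq> []" using motzkin_word_ne_Nil[OF assms(1)] .
  moreover have "2 < length (rev \<tau>1 @ \<tau>2)" using assms(2,3) \<open>q1 \<noteq> []\<close> by (cases q1) auto
  ultimately show ?thesis
    using first_return_join[OF assms(1), of q2] first_step_join_nonzero[OF assms(1), of q2] assms(2,3)
    by (subst psi.simps) (simp add: Let_def)
qed

lemma psi_mset: "motzkin_path p \<sigma> \<Longrightarrow> mset (leaves (psi p \<sigma>)) = mset \<sigma>"
proof (induction rule: motzkin_path_induct)
  case (base a b)
  then show ?case by (simp add: psi_base)
next
  case (Cons_0 a q \<tau>)
  then show ?case by (simp add: psi_Cons_0 motzkin_path_length)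
next
  case (join q1 \<tau>1 q2 \<tau>2)
  then show ?case by (simp add: psi_join motzkin_path_def)
qed

lemma psi_relabel: "motzkin_path p \<sigma> \<Longrightarrow> psi p (map g \<sigma>) = relabel g (psi p \<sigma>)"
proof (induction rule: motzkin_path_induct)
  case (base a b)
  then show ?case by (simp add: psi_base)
next
  case (Cons_0 a q \<tau>)
  then show ?case by (simp add: psi_Cons_0 motzkin_path_length)
next
  case (join q1 \<tau>1 q2 \<tau>2)
  then show ?case by (simp add: psi_join motzkin_path_def rev_map[symmetric])
qed

lemma motzkin_path_join_psi:
  assumes "motzkin_path q1 \<tau>1" "motzkin_path q2 \<tau>2" "set \<tau>1 \<inter> set \<tau>2 = {}" "hd \<tau>1 < hd \<tau>2"
  shows "motzkin_path (mirror q1 @ -1 # q2) (rev \<tau>1 @ \<tau>2)"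
    and "psi (mirror q1 @ -1 # q2) (rev \<tau>1 @ \<tau>2) = Node (psi q1 \<tau>1) (psi q2 \<tau>2)"
  using assms motzkin_path_join[of \<tau>1 q1 \<tau>2 q2] psi_join[of q1 \<tau>1 \<tau>2 q2]
  by (simp_all add: motzkin_path_def)

lemma psi_is_Node:
  assumes "motzkin_path p \<sigma>"
  shows "\<exists>l r. psi p \<sigma> = Node l r"
  using assms
proof (cases rule: motzkin_path_cases)
  case (Cons_0 a q \<tau>)
  then show ?thesis by (simp add: psi_Cons_0 motzkin_path_length)
next
  case (join q1 \<tau>1 q2 \<tau>2)
  then show ?thesis by (simp add: psi_join motzkin_path_def)
qed (simp add: psi_base)

lemma psi_inj_up_to_teq:
  assumes "motzkin_path p \<sigma>" "motzkin_path p' \<sigma>'" "teq (psi p \<sigma>) (psi p' \<sigma>')"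
  shows "p = p' \<and> \<sigma> = \<sigma>'"
  using assms
proof (induction p \<sigma> arbitrary: p' \<sigma>' rule: motzkin_path_induct)
  case (base a b)
  from base.prems(1) show ?case
  proof (cases rule: motzkin_path_cases)
    case (base a' b')
    then show ?thesis using \<open>a < b\<close> base.prems(2) by (auto simp: psi_base teq_Node_iff teq_Leaf_iff)
  next
    case (Cons_0 a' q \<tau>)
    then show ?thesis using base.prems(2) psi_is_Node[of q \<tau>]
      by (auto simp: psi_base psi_Cons_0 motzkin_path_length teq_Node_iff teq_Leaf_iff)
  next
    case (join q1 \<tau>1 q2 \<tau>2)
    then show ?thesis using base.prems(2) psi_is_Node[of q1 \<tau>1] psi_is_Node[of q2 \<tau>2]
      by (auto simp: psi_base psi_join motzkin_path_def teq_Node_iff teq_Leaf_iff)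
  qed
next
  case (Cons_0 a q \<tau>)
  note IH = Cons_0.IH
  have \<tau>: "psi (0 # q) (a # \<tau>) = Node (Leaf a) (psi q \<tau>)"
    using Cons_0.hyps(1) by (simp add: psi_Cons_0 motzkin_path_length)
  from Cons_0.prems(1) show ?case
  proof (cases rule: motzkin_path_cases)
    case (base a' b')
    then show ?thesis using Cons_0.prems(2) psi_is_Node[OF Cons_0.hyps(1)]
      by (auto simp: \<tau> psi_base teq_Node_iff teq_Leaf_iff)
  next
    case (Cons_0 a' q' \<tau>')
    then have "a = a' \<and> teq (psi q \<tau>) (psi q' \<tau>')"
      using Cons_0.prems(2) psi_is_Node[of q' \<tau>']
      by (auto simp: \<tau> psi_Cons_0 motzkin_path_length teq_Node_iff teq_Leaf_iff)
    then show ?thesis using IH Cons_0 by blast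
  next
    case (join q1 \<tau>1 q2 \<tau>2)
    then show ?thesis using Cons_0.prems(2) psi_is_Node[of q1 \<tau>1] psi_is_Node[of q2 \<tau>2]
      by (auto simp: \<tau> psi_join motzkin_path_def teq_Node_iff teq_Leaf_iff)
  qed
next
  case (join q1 \<tau>1 q2 \<tau>2)
  note IH = join.IH and paths = join.hyps(1,2) and order = join.hyps(4) and equiv = join.prems(2)
  have \<tau>: "psi (mirror q1 @ -1 # q2) (rev \<tau>1 @ \<tau>2) = Node (psi q1 \<tau>1) (psi q2 \<tau>2)"
    using paths by (simp add: psi_join motzkin_path_def)
  from join.prems(1) show ?case
  proof (cases rule: motzkin_path_cases)
    case (base a' b')
    then show ?thesis using equiv psi_is_Node[OF paths(1)] psi_is_Node[OF paths(2)]
      by (auto simp: \<tau> psi_base teq_Node_iff teq_Leaf_iff)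
  next
    case (Cons_0 a' q' \<tau>')
    then show ?thesis using equiv psi_is_Node[OF paths(1)] psi_is_Node[OF paths(2)]
      by (auto simp: \<tau> psi_Cons_0 motzkin_path_length teq_Node_iff teq_Leaf_iff)
  next
    case (join q1' \<tau>1' q2' \<tau>2')
    then have "psi p' \<sigma>' = Node (psi q1' \<tau>1') (psi q2' \<tau>2')"
      by (simp add: psi_join motzkin_path_def)
    then consider
        "teq (psi q1 \<tau>1) (psi q1' \<tau>1')" "teq (psi q2 \<tau>2) (psi q2' \<tau>2')"
      | "teq (psi q1 \<tau>1) (psi q2' \<tau>2')" "teq (psi q2 \<tau>2) (psi q1' \<tau>1')"
      using equiv by (auto simp: \<tau> teq_Node_iff)
    then show ?thesis
    proof cases
      case 1
      then have "q1 = q1' \<and> \<tau>1 = \<tau>1'" "q2 = q2' \<and> \<tau>2 = \<tau>2'" using IH join by blast+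
      then show ?thesis using join by simp
    next
      case 2
      \<comment> \<open>a crosswise match would give hd \<tau>2 < hd \<tau>1\<close>
      then have "\<tau>1 = \<tau>2'" "\<tau>2 = \<tau>1'" using IH join by blast+
      then show ?thesis using order \<open>hd \<tau>1' < hd \<tau>2'\<close> by simp
    qed
  qed
qed

section \<open>\<Phi> agrees with psi\<close>

definition standardize :: "nat list \<Rightarrow> nat list" where
  "standardize \<tau> = map (lam_inv (set \<tau>)) \<tau>"

lemma set_standardize: "distinct \<tau> \<Longrightarrow> set (standardize \<tau>) = {1..length \<tau>}"
  using lam_inv_image[of "set \<tau>"] by (simp add: standardize_def distinct_card)

lemma lam_standardize: "map (lam (set \<tau>)) (standardize \<tau>) = \<tau>"
  by (simp add: standardize_def lam_lam_inv map_idI)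

lemma motzkin_path_standardize: "motzkin_path q \<tau> \<Longrightarrow> motzkin_path q (standardize \<tau>)"
proof -
  assume path: "motzkin_path q \<tau>"
  have "strict_mono_on (set \<tau>) (lam_inv (set \<tau>))"
    by (simp add: strict_mono_on_def lam_inv_strict_mono)
  moreover from this have "inj_on (lam_inv (set \<tau>)) (set \<tau>)"
    using strict_mono_on_imp_inj_on by blast
  ultimately show ?thesis
    using path labels_fit_map_mono by (auto simp: motzkin_path_def standardize_def distinct_map)
qed

lemma relabel_psi_standardize:
  assumes "motzkin_path q \<tau>"
  shows "relabel (lam (set \<tau>)) (psi q (standardize \<tau>)) = psi q \<tau>"
  using psi_relabel[OF motzkin_path_standardize[OF assms], of "lam (set \<tau>)"]
  by (simp add: lam_standardize)

lemma phi_Cons_0: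
  "2 \<le> length \<tau> \<Longrightarrow> phi (Suc f) (0 # q) (a # \<tau>) =
    (let J = {1..Suc (length \<tau>)} - {a}
     in Node (Leaf a) (relabel (lam J) (phi f q (map (lam_inv J) \<tau>))))"
  by (simp add: Let_def)

lemma phi_join:
  assumes "motzkin_word q1" "length \<tau>1 = Suc (length q1)" "length \<tau>2 = Suc (length q2)"
  shows "phi (Suc f) (mirror q1 @ -1 # q2) (rev \<tau>1 @ \<tau>2) =
    Node (relabel (lam (set \<tau>1)) (phi f q1 (standardize \<tau>1)))
         (relabel (lam (set \<tau>2)) (phi f q2 (standardize \<tau>2)))"
proof -
  have "q1 \<noteq> []" using motzkin_word_ne_Nil[OF assms(1)] .
  moreover have "2 < length (rev \<tau>1 @ \<tau>2)" using assms(2,3) \<open>q1 \<noteq> []\<close> by (cases q1) auto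
  moreover have "map uminus (rev (mirror q1)) = q1" by (simp add: mirror_def rev_map)
  ultimately show ?thesis
    using first_return_join[OF assms(1), of q2] first_step_join_nonzero[OF assms(1), of q2] assms(2,3)
    by (simp add: Let_def standardize_def)
qed

lemma phi_eq_psi:
  "motzkin_path p \<sigma> \<Longrightarrow> set \<sigma> = {1..length \<sigma>} \<Longrightarrow> length \<sigma> \<le> f \<Longrightarrow> phi f p \<sigma> = psi p \<sigma>"
proof (induction f arbitrary: p \<sigma>)
  case 0
  then show ?case using motzkin_path_length by fastforce
next
  case (Suc f)
  have IH: "relabel (lam (set \<tau>)) (phi f q (standardize \<tau>)) = psi q \<tau>"
    if "motzkin_path q \<tau>" "length \<tau> \<le> f" for q \<tau>
    using Suc.IH[OF motzkin_path_standardize[OF that(1)]] that relabel_psi_standardize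
      set_standardize[of \<tau>] by (simp add: motzkin_path_def standardize_def)
  from Suc.prems(1) show ?case
  proof (cases rule: motzkin_path_cases)
    case (base a b)
    then show ?thesis by (simp add: psi_base)
  next
    case (Cons_0 a q \<tau>)
    then have "{1..Suc (length \<tau>)} - {a} = set \<tau>" using Suc.prems(2) by auto
    moreover have "2 \<le> length \<tau>" using Cons_0 motzkin_path_length by blast
    ultimately have "phi (Suc f) p \<sigma> = Node (Leaf a) (relabel (lam (set \<tau>)) (phi f q (standardize \<tau>)))"
      using Cons_0 by (simp add: phi_Cons_0 standardize_def Let_def)
    also have "\<dots> = psi p \<sigma>"
      using Cons_0 IH[of q \<tau>] Suc.prems(3) \<open>2 \<le> length \<tau>\<close> by (simp add: psi_Cons_0)
    finally show ?thesis .
  next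
    case (join q1 \<tau>1 q2 \<tau>2)
    have "phi (Suc f) p \<sigma> = Node (relabel (lam (set \<tau>1)) (phi f q1 (standardize \<tau>1)))
                                    (relabel (lam (set \<tau>2)) (phi f q2 (standardize \<tau>2)))"
      unfolding join(1,2) by (rule phi_join) (use join in \<open>auto simp: motzkin_path_def\<close>)
    also have "\<dots> = psi p \<sigma>"
      using join IH[of q1 \<tau>1] IH[of q2 \<tau>2] Suc.prems(3)
      by (simp add: psi_join motzkin_path_def)
    finally show ?thesis .
  qed
qed

lemma motzkin_paths_iff:
  assumes "1 < n"
  shows "(p, \<sigma>) \<in> motzkin_paths n \<longleftrightarrow> motzkin_path p \<sigma> \<and> set \<sigma> = {1..n}"
proof -
  have "length \<sigma> = n" if "distinct \<sigma>" "set \<sigma> = {1..n}"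
    using that distinct_card by fastforce
  moreover have "{1..n - 2} = {1..<length p}" if "length p = n - 1" using that assms by auto
  ultimately show ?thesis using assms labels_fit_iff_nth[of \<sigma> p]
    unfolding motzkin_paths_def motzkin_def well_labelled_def motzkin_path_def motzkin_word_def
      step_fits_def
    by auto
qed

lemma Phi_eq_psi:
  assumes "motzkin_path p \<sigma>" "set \<sigma> = {1..n}"
  shows "Phi (p, \<sigma>) = psi p \<sigma>"
proof -
  have "length \<sigma> = n" using assms distinct_card[of \<sigma>] by (simp add: motzkin_path_def)
  then show ?thesis using assms by (simp add: Phi_def phi_eq_psi)
qed

lemma psi_in_labelled_trees:
  assumes "motzkin_path p \<sigma>" "set \<sigma> = {1..n}"
  shows "psi p \<sigma> \<in> labelled_trees n"
proof -
  have mset: "mset (leaves (psi p \<sigma>)) = mset \<sigma>" using psi_mset[OF assms(1)] .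
  have "distinct \<sigma>" using assms(1) by (simp add: motzkin_path_def)
  then have "distinct (leaves (psi p \<sigma>))" using mset_eq_imp_distinct_iff[OF mset] by simp
  moreover have "set (leaves (psi p \<sigma>)) = set \<sigma>" using arg_cong[OF mset, of set_mset] by simp
  ultimately show ?thesis using assms(2) by (simp add: labelled_trees_def)
qed

lemma length_leaves_Node: "2 \<le> length (leaves (Node l r))"
  using leaves_ne_Nil[of l] leaves_ne_Nil[of r] by (cases "leaves l"; cases "leaves r") auto

lemma psi_Cons_0_realises:
  assumes "motzkin_path q \<tau>" "a \<notin> set \<tau>" "teq (psi q \<tau>) B"
  shows "motzkin_path (0 # q) (a # \<tau>)"
    and "teq (psi (0 # q) (a # \<tau>)) (Node (Leaf a) B)"
    and "teq (psi (0 # q) (a # \<tau>)) (Node B (Leaf a))"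
  using assms motzkin_path_length[OF assms(1)]
  by (auto simp: motzkin_path_Cons_0 psi_Cons_0 intro: teq.intros)

lemma psi_join_realises:
  assumes A: "motzkin_path q1 \<tau>1" "teq (psi q1 \<tau>1) A"
    and B: "motzkin_path q2 \<tau>2" "teq (psi q2 \<tau>2) B"
    and disjoint: "set \<tau>1 \<inter> set \<tau>2 = {}"
  shows "\<exists>p \<sigma>. motzkin_path p \<sigma> \<and> set \<sigma> = set \<tau>1 \<union> set \<tau>2 \<and> teq (psi p \<sigma>) (Node A B)"
proof -
  have "\<tau>1 \<noteq> []" "\<tau>2 \<noteq> []" using A(1) B(1) motzkin_path_length by fastforce+
  then have "hd \<tau>1 \<noteq> hd \<tau>2" using disjoint by (metis disjoint_iff list.set_sel(1))
  then consider "hd \<tau>1 < hd \<tau>2" | "hd \<tau>2 < hd \<tau>1" by linarith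
  then show ?thesis
  proof cases
    case 1
    then show ?thesis using A B motzkin_path_join_psi[OF A(1) B(1) disjoint]
      by (intro exI[of _ "mirror q1 @ -1 # q2"] exI[of _ "rev \<tau>1 @ \<tau>2"])
        (auto intro: teq.intros)
  next
    case 2
    moreover have "set \<tau>2 \<inter> set \<tau>1 = {}" using disjoint by blast
    ultimately show ?thesis using A B motzkin_path_join_psi[OF B(1) A(1)]
      by (intro exI[of _ "mirror q2 @ -1 # q1"] exI[of _ "rev \<tau>2 @ \<tau>1"])
        (auto intro: teq.intros)
  qed
qed

lemma psi_surj_up_to_teq:
  assumes "distinct (leaves t)" "2 \<le> length (leaves t)"
  shows "\<exists>p \<sigma>. motzkin_path p \<sigma> \<and> set \<sigma> = set (leaves t) \<and> teq (psi p \<sigma>) t"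
  using assms
proof (induction t)
  case (Node A B)
  have IH_A: "\<exists>p \<sigma>. motzkin_path p \<sigma> \<and> set \<sigma> = set (leaves A) \<and> teq (psi p \<sigma>) A"
    if "A = Node l r" for l r
    using Node.IH(1) Node.prems(1) length_leaves_Node[of l r] that by auto
  have IH_B: "\<exists>p \<sigma>. motzkin_path p \<sigma> \<and> set \<sigma> = set (leaves B) \<and> teq (psi p \<sigma>) B"
    if "B = Node l r" for l r
    using Node.IH(2) Node.prems(1) length_leaves_Node[of l r] that by auto
  have disjoint: "set (leaves A) \<inter> set (leaves B) = {}" using Node.prems(1) by simp
  show ?case
  proof (cases A; cases B)
    fix a b assume ab: "A = Leaf a" "B = Leaf b"
    then have "a \<noteq> b" using disjoint by auto
    then have "motzkin_path [-1] [min a b, max a b]" "set [min a b, max a b] = {a, b}"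
      "teq (psi [-1] [min a b, max a b]) (Node (Leaf a) (Leaf b))"
      by (auto simp: motzkin_path_base psi_base min_def max_def intro: teq.intros)
    then show ?thesis using ab by (intro exI[of _ "[-1]"] exI[of _ "[min a b, max a b]"]) simp
  next
    fix a l r assume "A = Leaf a" "B = Node l r"
    moreover from this obtain q \<tau> where "motzkin_path q \<tau>" "set \<tau> = set (leaves B)" "teq (psi q \<tau>) B"
      using IH_B by blast
    ultimately show ?thesis using disjoint psi_Cons_0_realises(1,2)[of q \<tau> a B]
      by (intro exI[of _ "0 # q"] exI[of _ "a # \<tau>"]) auto
  next
    fix l r b assume "A = Node l r" "B = Leaf b"
    moreover from this obtain q \<tau> where "motzkin_path q \<tau>" "set \<tau> = set (leaves A)" "teq (psi q \<tau>) A"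
      using IH_A by blast
    ultimately show ?thesis using disjoint psi_Cons_0_realises(1,3)[of q \<tau> b A]
      by (intro exI[of _ "0 # q"] exI[of _ "b # \<tau>"]) auto
  next
    fix l r l' r' assume "A = Node l r" "B = Node l' r'"
    then obtain q1 \<tau>1 q2 \<tau>2 where
      "motzkin_path q1 \<tau>1" "set \<tau>1 = set (leaves A)" "teq (psi q1 \<tau>1) A"
      "motzkin_path q2 \<tau>2" "set \<tau>2 = set (leaves B)" "teq (psi q2 \<tau>2) B"
      using IH_A IH_B by blast
    then show ?thesis using disjoint psi_join_realises[of q1 \<tau>1 A q2 \<tau>2 B] by simp
  qed
qed simp

lemma bij_betw_classes:
  assumes equiv: "equiv UNIV r" and into: "f ` A \<subseteq> B"
    and inj: "\<And>x y. x \<in> A \<Longrightarrow> y \<in> A \<Longrightarrow> (f x, f y) \<in> r \<Longrightarrow> x = y"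
    and surj: "\<And>b. b \<in> B \<Longrightarrow> \<exists>a \<in> A. (f a, b) \<in> r"
  shows "bij_betw (\<lambda>a. r `` {f a}) A (B // r)"
  unfolding bij_betw_def
proof
  show "inj_on (\<lambda>a. r `` {f a}) A"
  proof (rule inj_onI)
    fix x y assume "x \<in> A" "y \<in> A" "r `` {f x} = r `` {f y}"
    then show "x = y" using inj eq_equiv_class_iff[OF equiv UNIV_I UNIV_I] by blast
  qed
  show "(\<lambda>a. r `` {f a}) ` A = B // r"
  proof
    show "(\<lambda>a. r `` {f a}) ` A \<subseteq> B // r" using into by (auto intro: quotientI)
    show "B // r \<subseteq> (\<lambda>a. r `` {f a}) ` A"
    proof
      fix X assume "X \<in> B // r"
      then obtain b where "b \<in> B" "X = r `` {b}" by (auto elim: quotientE)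
      moreover obtain a where "a \<in> A" "(f a, b) \<in> r" using surj \<open>b \<in> B\<close> by blast
      ultimately show "X \<in> (\<lambda>a. r `` {f a}) ` A" using equiv_class_eq[OF equiv] by blast
    qed
  qed
qed

lemma labelled_tree_realised:
  assumes "1 < n" "t \<in> labelled_trees n"
  obtains p \<sigma> where "motzkin_path p \<sigma>" "set \<sigma> = {1..n}" "teq (psi p \<sigma>) t"
proof -
  have "distinct (leaves t)" "set (leaves t) = {1..n}" using assms(2) by (auto simp: labelled_trees_def)
  moreover from this have "2 \<le> length (leaves t)" using assms(1) distinct_card by fastforce
  ultimately show thesis using psi_surj_up_to_teq that by blast
qed

theorem theorem1:
  fixes n :: nat
  assumes "n > 1"
  shows "bij_betw (\<lambda>w. teq_rel `` {Phi w}) (motzkin_paths n) (labelled_trees n // teq_rel)"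
proof (rule bij_betw_classes[OF equiv_teq_rel])
  note paths = motzkin_paths_iff[OF assms]
  have path: "motzkin_path p \<sigma>" "Phi (p, \<sigma>) = psi p \<sigma>" "psi p \<sigma> \<in> labelled_trees n"
    if "(p, \<sigma>) \<in> motzkin_paths n" for p \<sigma>
    using that paths Phi_eq_psi psi_in_labelled_trees by blast+
  show "Phi ` motzkin_paths n \<subseteq> labelled_trees n" using path by auto
  show "w = w'" if "w \<in> motzkin_paths n" "w' \<in> motzkin_paths n" "(Phi w, Phi w') \<in> teq_rel" for w w'
  proof -
    obtain p \<sigma> p' \<sigma>' where w: "w = (p, \<sigma>)" "w' = (p', \<sigma>')" by fastforce
    then have "teq (psi p \<sigma>) (psi p' \<sigma>')" using that path(2) by (simp add: teq_rel_def)
    then show ?thesis using psi_inj_up_to_teq path(1) that w by blast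
  qed
  show "\<exists>w \<in> motzkin_paths n. (Phi w, t) \<in> teq_rel" if t: "t \<in> labelled_trees n" for t
  proof -
    obtain p \<sigma> where "motzkin_path p \<sigma>" "set \<sigma> = {1..n}" "teq (psi p \<sigma>) t"
      using labelled_tree_realised[OF assms t] .
    then have "(p, \<sigma>) \<in> motzkin_paths n" "(Phi (p, \<sigma>), t) \<in> teq_rel"
      using paths path(2) by (auto simp: teq_rel_def)
    then show ?thesis by blast
  qed
qed

end
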